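(* If $\pi$ is a permutation with exactly one descent, then $\mu(1,\pi)=-\mu(21,\pi)$.
   Context: A permutation of length $n$ is an arrangement of $1,\dots,n$; $1$ denotes the permutation of length one and $21$ the decreasing permutation of length two. The permutation poset is ordered by pattern containment: $\sigma\le\pi$ if $\pi$ has a subsequence in the same relative order as $\sigma$. A descent of $\pi$ is an index $i$ with $\pi_i>\pi_{i+1}$. $\mu$ is the Möbius function of this poset: $\mu(a,a)=1$, $\mu(a,b)=-\sum_{a\le z<b}\mu(a,z)$ for $a<b$, $\mu(a,b)=0$ if $a\not\le b$. *)

theory Defs
  imports Main
begin

definition is_perm :: "nat list \<Rightarrow> bool" where
  "is_perm p \<longleftrightarrow> distinct p \<and> set p = {1..length p}"

definition same_order :: "nat list \<Rightarrow> nat list \<Rightarrow> bool" where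
  "same_order xs ys \<longleftrightarrow> length xs = length ys \<and>
     (\<forall>i<length xs. \<forall>j<length xs. (xs ! i < xs ! j) \<longleftrightarrow> (ys ! i < ys ! j))"

definition pat_le :: "nat list \<Rightarrow> nat list \<Rightarrow> bool" where
  "pat_le s p \<longleftrightarrow> (\<exists>ys \<in> set (subseqs p). same_order s ys)"

definition descents :: "nat list \<Rightarrow> nat" where
  "descents p = card {i. Suc i < length p \<and> p ! i > p ! Suc i}"

text \<open>A fuel argument guarantees well-definedness; fuel length b + 1 always suffices
  since every z strictly below b is strictly shorter than b.\<close>
fun mu_fuel :: "nat \<Rightarrow> nat list \<Rightarrow> nat list \<Rightarrow> int" where
  "mu_fuel 0 a b = 0"
| "mu_fuel (Suc k) a b =
     (if a = b then 1
      else if pat_le a b then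
        - (\<Sum>z \<in> {z. is_perm z \<and> pat_le a z \<and> pat_le z b \<and> z \<noteq> b}. mu_fuel k a z)
      else 0)"

definition mu :: "nat list \<Rightarrow> nat list \<Rightarrow> int" where
  "mu a b = mu_fuel (Suc (length b)) a b"

end

theory Submission
  imports Defs "HOL-Library.Sublist"
begin

(* A permutation with a single descent avoids 321 and contains 21, and we prove
   the identity for every 321-avoiding permutation z containing 21, by strong
   induction on the length of z.  Unfolding the recursion of mu(1,z), the interval
   [1,z) splits into the permutations containing 21, which form [21,z), and the
   remaining ones, which are the increasing permutations 12...k below z.  These
   form a chain, on which mu(1,12...k) is 1, -1, 0, 0, ... for k = 1, 2, 3, ...;
   since a 321-avoiding z of length at least 3 contains 12, the chain part
   contributes 1 - 1 = 0.  On [21,z) the induction hypothesis turns mu(1,w) into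
   -mu(21,w), and the recursion of mu(21,z) closes the argument; z = 21 is the
   base case. *)

lemma subseq_index_map:
  assumes "subseq ys xs"
  shows "\<exists>f. (\<forall>i j. i < j \<longrightarrow> j < length ys \<longrightarrow> f i < f j) \<and>
             (\<forall>i<length ys. f i < length xs \<and> ys ! i = xs ! f i)"
  using assms
proof (induction rule: list_emb.induct)
  case (list_emb_Nil ys)
  then show ?case by auto
next
  case (list_emb_Cons xs ys y)
  then obtain f where "\<forall>i j. i < j \<longrightarrow> j < length xs \<longrightarrow> f i < f j"
    "\<forall>i<length xs. f i < length ys \<and> xs ! i = ys ! f i" by blast
  then show ?case by (intro exI[of _ "Suc \<circ> f"]) auto
next
  case (list_emb_Cons2 x y xs ys)
  then obtain f where f: "\<forall>i j. i < j \<longrightarrow> j < length xs \<longrightarrow> f i < f j"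
    "\<forall>i<length xs. f i < length ys \<and> xs ! i = ys ! f i" by blast
  define g where "g i = (if i = 0 then 0 else Suc (f (i - 1)))" for i
  have "g i < g j" if "i < j" "j < length (x # xs)" for i j
    using f(1) that unfolding g_def by (cases i; cases j) auto
  moreover have "g i < length (y # ys) \<and> (x # xs) ! i = (y # ys) ! g i"
    if "i < length (x # xs)" for i
    using f(2) list_emb_Cons2.hyps that unfolding g_def by (cases i) auto
  ultimately show ?case by blast
qed

lemma pat_le_index_map:
  assumes "pat_le s p"
  shows "\<exists>f. (\<forall>i j. i < j \<longrightarrow> j < length s \<longrightarrow> f i < f j) \<and>
             (\<forall>i<length s. f i < length p) \<and>
             (\<forall>i<length s. \<forall>j<length s. s ! i < s ! j \<longleftrightarrow> p ! f i < p ! f j)"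
proof -
  obtain ys where ys: "subseq ys p" "same_order s ys"
    using assms unfolding pat_le_def by auto
  then obtain f where f: "\<forall>i j. i < j \<longrightarrow> j < length ys \<longrightarrow> f i < f j"
    "\<forall>i<length ys. f i < length p \<and> ys ! i = p ! f i"
    using subseq_index_map by blast
  have "length ys = length s" using ys(2) unfolding same_order_def by simp
  with f ys(2) show ?thesis unfolding same_order_def by (metis (no_types, lifting))
qed

lemma pat_le_length: "pat_le s p \<Longrightarrow> length s \<le> length p"
  unfolding pat_le_def same_order_def by (auto dest: list_emb_length)

lemma subseq_pair: "i < j \<Longrightarrow> j < length xs \<Longrightarrow> subseq [xs ! i, xs ! j] xs"
proof (induction xs arbitrary: i j)
  case Nil
  then show ?case by simp
next
  case (Cons x xs)
  show ?case
  proof (cases i)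
    case 0
    with Cons.prems have "xs ! (j - 1) \<in> set xs" by (cases j) auto
    then have "subseq [xs ! (j - 1)] xs" by (simp add: subseq_singleton_left)
    with 0 Cons.prems show ?thesis by (cases j) auto
  next
    case (Suc i')
    with Cons.prems obtain j' where j: "j = Suc j'" by (cases j) auto
    with Suc Cons have "subseq [xs ! i', xs ! j'] xs" by auto
    with Suc j show ?thesis by (metis list_emb_Cons nth_Cons_Suc)
  qed
qed

lemma pat_le_pairI:
  "i < j \<Longrightarrow> j < length xs \<Longrightarrow> same_order s [xs ! i, xs ! j] \<Longrightarrow> pat_le s xs"
  unfolding pat_le_def
  by (rule bexI[of _ "[xs ! i, xs ! j]"]) (simp_all add: subseq_pair in_set_subseqs)

lemma pat_le_21I: "i < j \<Longrightarrow> j < length xs \<Longrightarrow> xs ! j < xs ! i \<Longrightarrow> pat_le [2, 1] xs"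
  by (erule pat_le_pairI) (auto simp: same_order_def less_Suc_eq nth_Cons')

lemma pat_le_12I: "i < j \<Longrightarrow> j < length xs \<Longrightarrow> xs ! i < xs ! j \<Longrightarrow> pat_le [1, 2] xs"
  by (erule pat_le_pairI) (auto simp: same_order_def less_Suc_eq nth_Cons')

lemma pat_le_1I: "xs \<noteq> [] \<Longrightarrow> pat_le [1] xs"
  unfolding pat_le_def in_set_subseqs
  by (intro bexI[of _ "[hd xs]"]) (auto simp: same_order_def subseq_singleton_left)

lemma pat_le_21D:
  assumes "pat_le [2, 1] xs"
  obtains i j where "i < j" "j < length xs" "xs ! j < xs ! i"
proof -
  let ?n = "length [2::nat, 1]"
  obtain f where f: "\<forall>i j. i < j \<longrightarrow> j < ?n \<longrightarrow> f i < f j" "\<forall>i<?n. f i < length xs"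
    "\<forall>i<?n. \<forall>j<?n. [2::nat, 1] ! i < [2, 1] ! j \<longleftrightarrow> xs ! f i < xs ! f j"
    using pat_le_index_map[OF assms] by blast
  have "f 0 < f 1" "f 1 < length xs" using f(1,2) by auto
  moreover have "xs ! f 1 < xs ! f 0" using f(3)[rule_format, of 1 0] by simp
  ultimately show ?thesis by (rule that[of "f 0" "f 1"])
qed

lemma perm_rank:
  assumes "is_perm p" "i < length p"
  shows "p ! i = card {j. j < length p \<and> p ! j \<le> p ! i}"
proof -
  have d: "distinct p" and s: "set p = {1..length p}"
    using assms(1) unfolding is_perm_def by auto
  have inj: "inj_on (nth p) {j. j < length p \<and> p ! j \<le> p ! i}"
    using d by (auto intro: inj_on_nth)
  have "nth p ` {j. j < length p \<and> p ! j \<le> p ! i} = {v \<in> set p. v \<le> p ! i}"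
    by (auto simp: in_set_conv_nth)
  also have "\<dots> = {1..p ! i}"
    using s assms(2) nth_mem[OF assms(2)] by auto
  finally show ?thesis using card_image[OF inj] by simp
qed

lemma perm_same_order_eq:
  assumes "is_perm p" "is_perm q" "same_order p q"
  shows "p = q"
proof (rule nth_equalityI)
  show l: "length p = length q" using assms(3) unfolding same_order_def by auto
  fix i assume i: "i < length p"
  have "{j. j < length p \<and> p ! j \<le> p ! i} = {j. j < length q \<and> q ! j \<le> q ! i}"
    using assms(3) i l unfolding same_order_def by (auto simp: not_less[symmetric])
  then show "p ! i = q ! i"
    using perm_rank[OF assms(1) i] perm_rank[OF assms(2)] i l by simp
qed

text \<open>A pattern strictly below a permutation is strictly shorter; this makes
  length a rank function for the poset and justifies induction on length.\<close>
lemma pat_le_less_length: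
  assumes "is_perm z" "is_perm b" "pat_le z b" "z \<noteq> b"
  shows "length z < length b"
proof -
  obtain ys where ys: "subseq ys b" "same_order z ys"
    using assms(3) unfolding pat_le_def by auto
  have "length ys = length z" using ys(2) unfolding same_order_def by auto
  moreover have "length ys \<le> length b" using ys(1) by (rule list_emb_length)
  moreover have "length ys \<noteq> length b"
  proof
    assume "length ys = length b"
    then have "ys = b" using subseq_same_length ys(1) by blast
    then show False using perm_same_order_eq[OF assms(1,2)] ys(2) assms(4) by simp
  qed
  ultimately show ?thesis by simp
qed

lemma finite_pats_below: "finite {z. is_perm z \<and> pat_le z b}"
proof (rule finite_subset)
  show "{z. is_perm z \<and> pat_le z b} \<subseteq> {xs. set xs \<subseteq> {0..length b} \<and> length xs \<le> length b}"
    using pat_le_length unfolding is_perm_def by fastforce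
  show "finite {xs. set xs \<subseteq> {0..length b} \<and> length xs \<le> length b}"
    by (rule finite_lists_length_le) simp
qed

definition below :: "nat list \<Rightarrow> nat list \<Rightarrow> nat list set" where
  "below a b = {z. is_perm z \<and> pat_le a z \<and> pat_le z b \<and> z \<noteq> b}"

lemma finite_below: "finite (below a b)"
  by (rule finite_subset[OF _ finite_pats_below[of b]]) (auto simp: below_def)

lemma below_less_length: "is_perm b \<Longrightarrow> z \<in> below a b \<Longrightarrow> length z < length b"
  using pat_le_less_length unfolding below_def by blast

section \<open>The defining recursion of the Moebius function\<close>

lemma mu_refl: "mu a a = 1"
  by (simp add: mu_def)

lemma mu_fuel_stable:
  "length b < k \<Longrightarrow> length b < k' \<Longrightarrow> is_perm b \<Longrightarrow> mu_fuel k a b = mu_fuel k' a b"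
proof (induction k arbitrary: k' b)
  case 0
  then show ?case by simp
next
  case (Suc m)
  then obtain m' where k': "k' = Suc m'" by (cases k') auto
  have "(\<Sum>z \<in> below a b. mu_fuel m a z) = (\<Sum>z \<in> below a b. mu_fuel m' a z)"
  proof (rule sum.cong)
    fix z assume z: "z \<in> below a b"
    then have "is_perm z" by (simp add: below_def)
    moreover have "length z < length b" using below_less_length[OF Suc.prems(3) z] .
    ultimately show "mu_fuel m a z = mu_fuel m' a z" using Suc.IH[of z m'] Suc.prems k' by simp
  qed simp
  then show ?case using k' by (simp add: below_def)
qed

lemma mu_unfold:
  assumes "is_perm b"
  shows "mu a b = (if a = b then 1 else if pat_le a b then - (\<Sum>z \<in> below a b. mu a z) else 0)"
proof -
  have "mu_fuel (length b) a z = mu a z" if "z \<in> below a b" for z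
  proof -
    have "is_perm z" using that by (simp add: below_def)
    moreover have "length z < length b" using below_less_length[OF assms that] .
    ultimately show ?thesis
      unfolding mu_def using mu_fuel_stable[of z "length b" "Suc (length z)"] by simp
  qed
  then have sum_eq: "(\<Sum>z \<in> below a b. mu_fuel (length b) a z) = (\<Sum>z \<in> below a b. mu a z)"
    by (rule sum.cong[OF refl])
  have "mu a b = (if a = b then 1 else if pat_le a b
                  then - (\<Sum>z \<in> below a b. mu_fuel (length b) a z) else 0)"
    by (simp only: mu_def mu_fuel.simps below_def)
  then show ?thesis by (simp only: sum_eq)
qed

section \<open>Increasing permutations form a chain\<close>

definition inc_perm :: "nat \<Rightarrow> nat list" where
  "inc_perm k = [1..<Suc k]"

lemma length_inc_perm [simp]: "length (inc_perm k) = k"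
  by (simp add: inc_perm_def)

lemma is_perm_inc_perm: "is_perm (inc_perm k)"
  by (auto simp: inc_perm_def is_perm_def)

lemma inc_perm_inj: "inc_perm j = inc_perm k \<Longrightarrow> j = k"
  by (metis length_inc_perm)

lemma inc_perm_1: "inc_perm 1 = [1]" and inc_perm_2: "inc_perm 2 = [1, 2]"
  by (simp_all add: inc_perm_def numeral_2_eq_2)

lemma sorted_perm_eq_inc_perm:
  assumes "is_perm w" "\<And>i j. i < j \<Longrightarrow> j < length w \<Longrightarrow> w ! i < w ! j"
  shows "w = inc_perm (length w)"
proof -
  have "sorted_wrt (<) w" unfolding sorted_wrt_iff_nth_less using assms(2) by blast
  moreover have "set w = {1..<Suc (length w)}" using assms(1) unfolding is_perm_def by auto
  moreover have "length w = card {1..<Suc (length w)}" by simp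
  ultimately have "sorted_list_of_set {1..<Suc (length w)} = w"
    using sorted_list_of_set_unique[of "{1..<Suc (length w)}" w] by simp
  then show ?thesis unfolding inc_perm_def by simp
qed

lemma avoids_21_inc_perm:
  assumes "is_perm w" "\<not> pat_le [2, 1] w"
  shows "w = inc_perm (length w)"
proof (rule sorted_perm_eq_inc_perm[OF assms(1)])
  fix i j assume ij: "i < j" "j < length w"
  have "w ! i \<noteq> w ! j"
    using assms(1) ij unfolding is_perm_def by (simp add: nth_eq_iff_index_eq)
  moreover have "\<not> w ! j < w ! i" using pat_le_21I[OF ij] assms(2) by blast
  ultimately show "w ! i < w ! j" by simp
qed

lemma pat_le_inc_perm_sorted:
  assumes "pat_le w (inc_perm k)" "i < j" "j < length w"
  shows "w ! i < w ! j"
proof -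
  obtain f where "\<forall>i j. i < j \<longrightarrow> j < length w \<longrightarrow> f i < f j"
     "\<forall>i<length w. f i < k"
     "\<forall>i<length w. \<forall>j<length w. w ! i < w ! j \<longleftrightarrow> inc_perm k ! f i < inc_perm k ! f j"
    using pat_le_index_map[OF assms(1)] by auto
  with assms(2,3) show ?thesis by (simp add: inc_perm_def del: upt_Suc)
qed

lemma pat_le_inc_perm_mono: "j \<le> k \<Longrightarrow> pat_le (inc_perm j) (inc_perm k)"
proof -
  assume "j \<le> k"
  then have "inc_perm k = inc_perm j @ [Suc j..<Suc k]"
    unfolding inc_perm_def using upt_add_eq_append[of 1 "Suc j" "k - j"] by (simp del: upt_Suc)
  then have "subseq (inc_perm j) (inc_perm k)" by (metis prefixI prefix_imp_subseq)
  moreover have "same_order (inc_perm j) (inc_perm j)" by (simp add: same_order_def)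
  ultimately show ?thesis unfolding pat_le_def by auto
qed

lemma below_inc_perm: "below [1] (inc_perm k) = inc_perm ` {1..<k}"
proof
  show "below [1] (inc_perm k) \<subseteq> inc_perm ` {1..<k}"
  proof
    fix w assume w: "w \<in> below [1] (inc_perm k)"
    then have perm: "is_perm w" and one: "pat_le [1] w" and sub: "pat_le w (inc_perm k)"
      by (auto simp: below_def)
    have "w = inc_perm (length w)"
      using perm pat_le_inc_perm_sorted[OF sub] by (rule sorted_perm_eq_inc_perm)
    moreover have "1 \<le> length w" using pat_le_length[OF one] by simp
    moreover have "length w < k" using below_less_length[OF is_perm_inc_perm w] by simp
    ultimately show "w \<in> inc_perm ` {1..<k}" by (intro image_eqI[where x = "length w"]) auto
  qed
next
  show "inc_perm ` {1..<k} \<subseteq> below [1] (inc_perm k)"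
  proof
    fix w assume "w \<in> inc_perm ` {1..<k}"
    then obtain j where j: "1 \<le> j" "j < k" "w = inc_perm j" by auto
    then have "inc_perm j \<noteq> []" "inc_perm j \<noteq> inc_perm k"
      by (auto dest: arg_cong[where f = length])
    then show "w \<in> below [1] (inc_perm k)" unfolding below_def
      using j is_perm_inc_perm[of j] pat_le_1I pat_le_inc_perm_mono[of j k] by simp
  qed
qed

text \<open>Moebius function from the bottom of a chain: 1, -1, 0, 0, ...\<close>
definition chain_mu :: "nat \<Rightarrow> int" where
  "chain_mu k = (if k = 1 then 1 else if k = 2 then -1 else 0)"

lemma sum_chain_mu: "2 \<le> k \<Longrightarrow> (\<Sum>j \<in> {1..<k}. chain_mu j) = - chain_mu k"
proof (induction k rule: dec_induct)
  case base
  then show ?case by (simp add: chain_mu_def)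
next
  case (step k)
  then have "(\<Sum>j \<in> {1..<Suc k}. chain_mu j) = (\<Sum>j \<in> {1..<k}. chain_mu j) + chain_mu k"
    by simp
  also have "\<dots> = 0" using step.IH by simp
  also have "\<dots> = - chain_mu (Suc k)" using step.hyps by (simp add: chain_mu_def)
  finally show ?case .
qed

lemma mu_1_inc_perm: "1 \<le> k \<Longrightarrow> mu [1] (inc_perm k) = chain_mu k"
proof (induction k rule: less_induct)
  case (less k)
  show ?case
  proof (cases "k = 1")
    case True
    then show ?thesis using inc_perm_1 mu_refl[of "[1]"] by (simp add: chain_mu_def)
  next
    case False
    with less.prems have k2: "2 \<le> k" by simp
    then have "[1] \<noteq> inc_perm k" "inc_perm k \<noteq> []"
      by (auto dest: arg_cong[where f = length])
    then have "mu [1] (inc_perm k) = - (\<Sum>w \<in> inc_perm ` {1..<k}. mu [1] w)"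
      using mu_unfold[OF is_perm_inc_perm, of "[1]" k] pat_le_1I below_inc_perm by simp
    also have "\<dots> = - (\<Sum>j \<in> {1..<k}. mu [1] (inc_perm j))"
      by (subst sum.reindex) (auto simp: inj_on_def dest: inc_perm_inj)
    also have "\<dots> = - (\<Sum>j \<in> {1..<k}. chain_mu j)"
      using less.IH by (intro arg_cong[where f=uminus] sum.cong) auto
    also have "\<dots> = chain_mu k" using sum_chain_mu[OF k2] by simp
    finally show ?thesis .
  qed
qed

section \<open>The identity for 321-avoiding permutations\<close>

definition has_321 :: "nat list \<Rightarrow> bool" where
  "has_321 xs \<longleftrightarrow>
     (\<exists>i j k. i < j \<and> j < k \<and> k < length xs \<and> xs ! j < xs ! i \<and> xs ! k < xs ! j)"

text \<open>Avoiding 321 is inherited by patterns, so the induction stays in the class.\<close>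
lemma has_321_mono:
  assumes "pat_le w z" "has_321 w"
  shows "has_321 z"
proof -
  obtain f where f: "\<forall>i j. i < j \<longrightarrow> j < length w \<longrightarrow> f i < f j"
     "\<forall>i<length w. f i < length z"
     "\<forall>i<length w. \<forall>j<length w. w ! i < w ! j \<longleftrightarrow> z ! f i < z ! f j"
    using pat_le_index_map[OF assms(1)] by blast
  obtain i j k where ijk: "i < j" "j < k" "k < length w" "w ! j < w ! i" "w ! k < w ! j"
    using assms(2) unfolding has_321_def by blast
  have "f i < f j" "f j < f k" "f k < length z" "z ! f j < z ! f i" "z ! f k < z ! f j"
    using ijk f(1)[rule_format, of i j] f(1)[rule_format, of j k] f(2)[rule_format, of k]
      f(3)[rule_format, of j i] f(3)[rule_format, of k j] by auto
  then show ?thesis unfolding has_321_def by blast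
qed

text \<open>Among the first three entries of a 321-avoiding permutation there is an ascent.\<close>
lemma avoids_321_contains_12:
  assumes "is_perm z" "3 \<le> length z" "\<not> has_321 z"
  shows "pat_le [1, 2] z"
proof (rule ccontr)
  assume no12: "\<not> pat_le [1, 2] z"
  have "distinct z" using assms(1) unfolding is_perm_def by simp
  then have "\<forall>i<length z. \<forall>j<length z. i \<noteq> j \<longrightarrow> z ! i \<noteq> z ! j"
    by (simp add: distinct_conv_nth)
  then have "z ! 0 \<noteq> z ! 1" "z ! 1 \<noteq> z ! 2"
    using assms(2) by (auto dest: spec[of _ 0] spec[of _ 1] spec[of _ 2])
  moreover have "\<not> z ! 0 < z ! 1" "\<not> z ! 1 < z ! 2"
    using no12 pat_le_12I[of 0 1 z] pat_le_12I[of 1 2 z] assms(2) by auto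
  ultimately have "has_321 z"
    unfolding has_321_def using assms(2) by (intro exI[of _ 0] exI[of _ 1] exI[of _ 2]) simp
  with assms(3) show False by simp
qed

lemma perm_length_2_contains_21:
  assumes "is_perm z" "length z = 2" "pat_le [2, 1] z"
  shows "z = [2, 1]"
proof -
  obtain a b where z: "z = [a, b]"
    using assms(2) by (auto simp: length_Suc_conv numeral_2_eq_2)
  have "set z = {1..2}" using assms(1,2) unfolding is_perm_def by simp
  then have "a \<le> 2" "1 \<le> b" using z by auto
  moreover obtain i j where "i < j" "j < length z" "z ! j < z ! i"
    using assms(3) by (rule pat_le_21D)
  then have "b < a" using assms(2) z by (auto simp: less_Suc_eq numeral_2_eq_2)
  ultimately show ?thesis using z by simp
qed

text \<open>Base case of the induction: the interval [1, 21) is the single point 1.\<close>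
lemma mu_1_21: "mu [1] [2, 1] = -1"
proof -
  have perm_21: "is_perm [2, 1]" by (auto simp: is_perm_def)
  have "below [1] [2, 1] = {[1]}"
  proof
    show "below [1] [2, 1] \<subseteq> {[1]}"
    proof
      fix w assume w: "w \<in> below [1] [2, 1]"
      then have perm: "is_perm w" and one: "pat_le [1] w" by (auto simp: below_def)
      have "length w < 2" using below_less_length[OF perm_21 w] by simp
      moreover have "1 \<le> length w" using pat_le_length[OF one] by simp
      ultimately have len: "length w = 1" by simp
      then have "\<not> pat_le [2, 1] w" using pat_le_length[of "[2, 1]" w] by auto
      then have "w = inc_perm 1" using avoids_21_inc_perm[OF perm] len by simp
      then show "w \<in> {[1]}" by (simp add: inc_perm_def)
    qed
    have "is_perm [1]" using is_perm_inc_perm[of 1] by (simp only: inc_perm_1)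
    moreover have "pat_le [1] [1]" "pat_le [1] [2, 1]" by (rule pat_le_1I, simp)+
    ultimately show "{[1]} \<subseteq> below [1] [2, 1]" by (simp add: below_def)
  qed
  moreover have "pat_le [1] [2, 1]" by (rule pat_le_1I) simp
  ultimately have "mu [1] [2, 1] = - mu [1] [1]" using mu_unfold[OF perm_21, of "[1]"] by simp
  then show ?thesis by (simp add: mu_refl)
qed

text \<open>Every permutation containing 21 contains 1, so [21, z) lies inside [1, z); the
  rest of [1, z) consists of permutations avoiding 21, i.e. increasing ones.\<close>
lemma below_21_subset_below_1: "below [2, 1] z \<subseteq> below [1] z"
proof
  fix w assume w: "w \<in> below [2, 1] z"
  then have "w \<noteq> []" using pat_le_length[of "[2, 1]" w] by (auto simp: below_def)
  with w show "w \<in> below [1] z" using pat_le_1I by (simp add: below_def)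
qed

lemma increasing_part_of_below_1:
  assumes "w \<in> below [1] z - below [2, 1] z"
  shows "w = inc_perm (length w)" "1 \<le> length w"
  using assms avoids_21_inc_perm pat_le_length[of "[1]" w] by (auto simp: below_def)

text \<open>If z contains 12 but is not 12 itself, the increasing permutations in [1, z)
  include 1 and 12, and their Moebius values cancel.\<close>
lemma sum_increasing_part_below_1:
  assumes "is_perm z" "pat_le [1, 2] z" "z \<noteq> [1, 2]"
  shows "(\<Sum>w \<in> below [1] z - below [2, 1] z. mu [1] w) = 0"
proof -
  let ?A = "below [1] z - below [2, 1] z"
  have "\<not> pat_le [2, 1] [1::nat]" "\<not> pat_le [2, 1] [1::nat, 2]"
    using pat_le_length[of "[2, 1]" "[1]"] pat_le_21D[of "[1, 2]"]
    by (auto simp: less_Suc_eq nth_Cons')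
  moreover have "is_perm [1]" "is_perm [1, 2]"
    using is_perm_inc_perm[of 1] is_perm_inc_perm[of 2] by (simp_all only: inc_perm_1 inc_perm_2)
  moreover have "pat_le [1] [1]" "pat_le [1] [1, 2]" "pat_le [1] z"
    using pat_le_length[OF assms(2)] by (rule_tac pat_le_1I, force)+
  moreover have "[1] \<noteq> z" using pat_le_length[OF assms(2)] by auto
  ultimately have in_A: "{[1], [1, 2]} \<subseteq> ?A"
    using assms(2,3) by (auto simp: below_def)
  have vanish: "mu [1] w = 0" if w: "w \<in> ?A - {[1], [1, 2]}" for w
  proof -
    have eq: "w = inc_perm (length w)" and pos: "1 \<le> length w"
      using w increasing_part_of_below_1 by auto
    have "w \<noteq> inc_perm 1" "w \<noteq> inc_perm 2"
      using w unfolding inc_perm_1 inc_perm_2 by auto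
    then have "length w \<noteq> 1" "length w \<noteq> 2" by (metis eq)+
    moreover have "mu [1] w = chain_mu (length w)" using mu_1_inc_perm[OF pos] eq by metis
    ultimately show ?thesis by (simp add: chain_mu_def)
  qed
  have "(\<Sum>w \<in> ?A. mu [1] w) = (\<Sum>w \<in> {[1], [1, 2]}. mu [1] w)"
    using finite_below in_A vanish by (intro sum.mono_neutral_right) auto
  also have "\<dots> = mu [1] [1] + mu [1] [1, 2]" by simp
  also have "\<dots> = chain_mu 1 + chain_mu 2"
    using mu_1_inc_perm[of 1] mu_1_inc_perm[of 2] unfolding inc_perm_1 inc_perm_2 by simp
  also have "\<dots> = 0" by (simp add: chain_mu_def)
  finally show ?thesis .
qed

lemma mu_1_split:
  assumes "is_perm z" "pat_le [2, 1] z"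
  shows "mu [1] z = - (\<Sum>w \<in> below [2, 1] z. mu [1] w)
                    - (\<Sum>w \<in> below [1] z - below [2, 1] z. mu [1] w)"
proof -
  have "[1] \<noteq> z" "z \<noteq> []" using pat_le_length[OF assms(2)] by auto
  then have "mu [1] z = - (\<Sum>w \<in> below [1] z. mu [1] w)"
    using mu_unfold[OF assms(1), of "[1]"] pat_le_1I by simp
  then show ?thesis
    using sum.subset_diff[OF below_21_subset_below_1 finite_below, of "mu [1]" z] by simp
qed

lemma mu_1_eq_neg_mu_21_avoiding_321:
  assumes "is_perm z" "pat_le [2, 1] z" "\<not> has_321 z"
  shows "mu [1] z = - mu [2, 1] z"
  using assms
proof (induction "length z" arbitrary: z rule: less_induct)
  case less
  show ?case
  proof (cases "z = [2, 1]")
    case True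
    then show ?thesis using mu_1_21 mu_refl[of "[2, 1]"] by simp
  next
    case False
    have "length z \<noteq> 2" using perm_length_2_contains_21 less.prems(1,2) False by blast
    then have "3 \<le> length z" using pat_le_length[OF less.prems(2)] by simp
    then have "pat_le [1, 2] z" "z \<noteq> [1, 2]"
      using avoids_321_contains_12 less.prems(1,3) by auto
    then have increasing_part: "(\<Sum>w \<in> below [1] z - below [2, 1] z. mu [1] w) = 0"
      using sum_increasing_part_below_1 less.prems(1) by blast
    have IH: "mu [1] w = - mu [2, 1] w" if "w \<in> below [2, 1] z" for w
    proof -
      from that have "is_perm w" "pat_le [2, 1] w" "pat_le w z" by (auto simp: below_def)
      moreover have "length w < length z" using below_less_length[OF less.prems(1) that] .
      ultimately show ?thesis using less.hyps has_321_mono less.prems(3) by blast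
    qed
    have "mu [1] z = (\<Sum>w \<in> below [2, 1] z. mu [2, 1] w)"
      using mu_1_split[OF less.prems(1,2)] increasing_part IH by (simp add: sum_negf)
    also have "\<dots> = - mu [2, 1] z"
      using mu_unfold[OF less.prems(1), of "[2, 1]"] less.prems(2) False by auto
    finally show ?thesis .
  qed
qed

section \<open>Permutations with one descent\<close>

lemma descent_between_inversion:
  fixes xs :: "nat list"
  assumes "i < j" "j < length xs" "xs ! j < xs ! i"
  shows "\<exists>d. i \<le> d \<and> d < j \<and> xs ! Suc d < xs ! d"
  using assms
proof (induction j)
  case 0
  then show ?case by simp
next
  case (Suc j)
  show ?case
  proof (cases "xs ! Suc j < xs ! j")
    case True
    then show ?thesis using Suc.prems by (intro exI[of _ j]) auto
  next
    case False
    with Suc.prems(3) have "i \<noteq> j" by auto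
    with Suc.prems(1) have "i < j" by simp
    moreover have "xs ! j < xs ! i" using False Suc.prems(3) by simp
    ultimately obtain d where "i \<le> d" "d < j" "xs ! Suc d < xs ! d"
      using Suc.IH Suc.prems(2) by auto
    then show ?thesis by (intro exI[of _ d]) simp
  qed
qed

lemma one_descent_contains_21:
  assumes "descents p = 1"
  shows "pat_le [2, 1] p"
proof -
  obtain d where "{i. Suc i < length p \<and> p ! i > p ! Suc i} = {d}"
    using assms unfolding descents_def by (rule card_1_singletonE)
  then show ?thesis using pat_le_21I[of d "Suc d" p] by auto
qed

text \<open>An occurrence of 321 would force two distinct descents.\<close>
lemma one_descent_avoids_321:
  assumes "descents p = 1"
  shows "\<not> has_321 p"
proof
  let ?D = "{i. Suc i < length p \<and> p ! i > p ! Suc i}"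
  obtain d where D: "?D = {d}"
    using assms unfolding descents_def by (rule card_1_singletonE)
  assume "has_321 p"
  then obtain i j k where ijk: "i < j" "j < k" "k < length p" "p ! j < p ! i" "p ! k < p ! j"
    unfolding has_321_def by blast
  obtain d1 where d1: "i \<le> d1" "d1 < j" "p ! Suc d1 < p ! d1"
    using descent_between_inversion[of i j p] ijk by auto
  obtain d2 where d2: "j \<le> d2" "d2 < k" "p ! Suc d2 < p ! d2"
    using descent_between_inversion[of j k p] ijk by auto
  have "d1 \<in> ?D" "d2 \<in> ?D" using d1 d2 ijk by auto
  with D d1 d2 show False by auto
qed

theorem mainTheorem9:
  assumes "is_perm \<pi>" and "descents \<pi> = 1"
  shows "mu [1] \<pi> = - mu [2, 1] \<pi>"
  using mu_1_eq_neg_mu_21_avoiding_321 assms(1)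
    one_descent_contains_21[OF assms(2)] one_descent_avoids_321[OF assms(2)] .

end
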